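(* Let $(P,\omega)$ be a canonically labeled sign-graded poset with $p$ elements and rank $r$. Then the Charney–Davis quantity $CD(P)=(-1)^{(p-1-r)/2}W(P,\omega;-1)$ is equal to the number of reverse alternating permutations in $\mathcal{L}(P,\omega)$ all of whose components have an odd number of letters.
   Context: $\omega:P\to\{1,\dots,p\}$ is a bijection; write $x\prec y$ if $y$ covers $x$, and $\epsilon(x,y)=1$ if $\omega(x)<\omega(y)$, $-1$ otherwise. $(P,\omega)$ is sign-graded of rank $r$ if $\sum_{i=1}^n\epsilon(x_{i-1},x_i)=r$ for every maximal chain $x_0\prec\cdots\prec x_n$; then each principal ideal $\Lambda_z=\{w\le z\}$ is likewise graded and $\rho(z)$ denotes its rank (the $\epsilon$-weight of any saturated chain from a minimal element to $z$). $\omega$ is canonical if $\rho$ takes values in $\{0,1\}$ and $\rho(x)<\rho(y)$ implies $\omega(x)<\omega(y)$. $\mathcal{L}(P,\omega)$ is the set of permutations $\omega(x_1)\cdots\omega(x_p)$ with $x_1,\dots,x_p$ a linear extension of $P$, and $W(P,\omega;t)=\sum_{\pi\in\mathcal{L}(P,\omega)}t^{\mathrm{des}(\pi)}$, $\mathrm{des}(\pi)=\#\{i:\pi_i>\pi_{i+1}\}$. (When $p-1-r$ is odd, $W(P,\omega;-1)=0$ and $CD(P)$ is $0$.) A permutation $\pi=\pi_1\cdots\pi_n$ is reverse alternating if $\pi_1<\pi_2>\pi_3<\cdots$. The components of $\pi\in\mathcal{L}(P,\omega)$ are the words $w_0,\dots,w_k$ in the factorization $\pi=w_0w_1\cdots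 w_k$ into maximal consecutive subwords such that all letters $a$ of a given $w_i$ have the same value $\rho(\omega^{-1}(a))$. *)

theory Defs
  imports Main
begin

definition poset_on :: "'a set \<Rightarrow> ('a \<Rightarrow> 'a \<Rightarrow> bool) \<Rightarrow> bool" where
  "poset_on P leq \<longleftrightarrow> finite P
     \<and> (\<forall>x\<in>P. leq x x)
     \<and> (\<forall>x\<in>P. \<forall>y\<in>P. leq x y \<and> leq y x \<longrightarrow> x = y)
     \<and> (\<forall>x\<in>P. \<forall>y\<in>P. \<forall>z\<in>P. leq x y \<and> leq y z \<longrightarrow> leq x z)"

definition less_in :: "('a \<Rightarrow> 'a \<Rightarrow> bool) \<Rightarrow> 'a \<Rightarrow> 'a \<Rightarrow> bool" where
  "less_in leq x y \<longleftrightarrow> leq x y \<and> x \<noteq> y"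

definition covers :: "'a set \<Rightarrow> ('a \<Rightarrow> 'a \<Rightarrow> bool) \<Rightarrow> 'a \<Rightarrow> 'a \<Rightarrow> bool" where
  "covers P leq x y \<longleftrightarrow> x \<in> P \<and> y \<in> P \<and> less_in leq x y
     \<and> \<not> (\<exists>z\<in>P. less_in leq x z \<and> less_in leq z y)"

definition eps :: "('a \<Rightarrow> nat) \<Rightarrow> 'a \<Rightarrow> 'a \<Rightarrow> int" where
  "eps \<omega> x y = (if \<omega> x < \<omega> y then 1 else -1)"

definition minimal_in :: "'a set \<Rightarrow> ('a \<Rightarrow> 'a \<Rightarrow> bool) \<Rightarrow> 'a \<Rightarrow> bool" where
  "minimal_in P leq x \<longleftrightarrow> x \<in> P \<and> \<not> (\<exists>y\<in>P. less_in leq y x)"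

definition maximal_in :: "'a set \<Rightarrow> ('a \<Rightarrow> 'a \<Rightarrow> bool) \<Rightarrow> 'a \<Rightarrow> bool" where
  "maximal_in P leq x \<longleftrightarrow> x \<in> P \<and> \<not> (\<exists>y\<in>P. less_in leq x y)"

definition sat_chain :: "'a set \<Rightarrow> ('a \<Rightarrow> 'a \<Rightarrow> bool) \<Rightarrow> 'a list \<Rightarrow> bool" where
  "sat_chain P leq xs \<longleftrightarrow> xs \<noteq> [] \<and> set xs \<subseteq> P
     \<and> (\<forall>i. Suc i < length xs \<longrightarrow> covers P leq (xs ! i) (xs ! Suc i))"

definition max_chain :: "'a set \<Rightarrow> ('a \<Rightarrow> 'a \<Rightarrow> bool) \<Rightarrow> 'a list \<Rightarrow> bool" where
  "max_chain P leq xs \<longleftrightarrow> sat_chain P leq xs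
     \<and> minimal_in P leq (hd xs) \<and> maximal_in P leq (last xs)"

definition chain_weight :: "('a \<Rightarrow> nat) \<Rightarrow> 'a list \<Rightarrow> int" where
  "chain_weight \<omega> xs = (\<Sum>i<length xs - 1. eps \<omega> (xs ! i) (xs ! Suc i))"

definition sign_graded :: "'a set \<Rightarrow> ('a \<Rightarrow> 'a \<Rightarrow> bool) \<Rightarrow> ('a \<Rightarrow> nat) \<Rightarrow> int \<Rightarrow> bool" where
  "sign_graded P leq \<omega> r \<longleftrightarrow> (\<forall>xs. max_chain P leq xs \<longrightarrow> chain_weight \<omega> xs = r)"

text \<open>rho z: the epsilon-weight of (any) saturated chain from a minimal element to z.\<close>
definition rho :: "'a set \<Rightarrow> ('a \<Rightarrow> 'a \<Rightarrow> bool) \<Rightarrow> ('a \<Rightarrow> nat) \<Rightarrow> 'a \<Rightarrow> int" where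
  "rho P leq \<omega> z = chain_weight \<omega>
     (SOME xs. sat_chain P leq xs \<and> minimal_in P leq (hd xs) \<and> last xs = z)"

definition canonical :: "'a set \<Rightarrow> ('a \<Rightarrow> 'a \<Rightarrow> bool) \<Rightarrow> ('a \<Rightarrow> nat) \<Rightarrow> bool" where
  "canonical P leq \<omega> \<longleftrightarrow> (\<forall>z\<in>P. rho P leq \<omega> z \<in> {0, 1})
     \<and> (\<forall>x\<in>P. \<forall>y\<in>P. rho P leq \<omega> x < rho P leq \<omega> y \<longrightarrow> \<omega> x < \<omega> y)"

definition linear_extension :: "'a set \<Rightarrow> ('a \<Rightarrow> 'a \<Rightarrow> bool) \<Rightarrow> 'a list \<Rightarrow> bool" where
  "linear_extension P leq xs \<longleftrightarrow> distinct xs \<and> set xs = P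
     \<and> (\<forall>i j. i < j \<and> j < length xs \<longrightarrow> \<not> less_in leq (xs ! j) (xs ! i))"

definition JH :: "'a set \<Rightarrow> ('a \<Rightarrow> 'a \<Rightarrow> bool) \<Rightarrow> ('a \<Rightarrow> nat) \<Rightarrow> nat list set" where
  "JH P leq \<omega> = {map \<omega> xs | xs. linear_extension P leq xs}"

definition des :: "nat list \<Rightarrow> nat" where
  "des \<pi> = card {i. Suc i < length \<pi> \<and> \<pi> ! i > \<pi> ! Suc i}"

definition W :: "'a set \<Rightarrow> ('a \<Rightarrow> 'a \<Rightarrow> bool) \<Rightarrow> ('a \<Rightarrow> nat) \<Rightarrow> int \<Rightarrow> int" where
  "W P leq \<omega> t = (\<Sum>\<pi>\<in>JH P leq \<omega>. t ^ des \<pi>)"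

definition CD :: "'a set \<Rightarrow> ('a \<Rightarrow> 'a \<Rightarrow> bool) \<Rightarrow> ('a \<Rightarrow> nat) \<Rightarrow> int \<Rightarrow> int" where
  "CD P leq \<omega> r = (let d = int (card P) - 1 - r in
     if odd d then 0 else (-1) ^ nat \<bar>d div 2\<bar> * W P leq \<omega> (-1))"

definition reverse_alternating :: "nat list \<Rightarrow> bool" where
  "reverse_alternating \<pi> \<longleftrightarrow> (\<forall>i. Suc i < length \<pi> \<longrightarrow>
     (if even i then \<pi> ! i < \<pi> ! Suc i else \<pi> ! i > \<pi> ! Suc i))"

text \<open>Every component (maximal run of consecutive letters a with equal value f a)
  has an odd number of letters; components are the runs i..j below.\<close>
definition components_odd :: "(nat \<Rightarrow> int) \<Rightarrow> nat list \<Rightarrow> bool" where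
  "components_odd f \<pi> \<longleftrightarrow> (\<forall>i j. i \<le> j \<and> j < length \<pi>
      \<and> (\<forall>k. i \<le> k \<and> k \<le> j \<longrightarrow> f (\<pi> ! k) = f (\<pi> ! i))
      \<and> (i = 0 \<or> f (\<pi> ! (i - 1)) \<noteq> f (\<pi> ! i))
      \<and> (Suc j = length \<pi> \<or> f (\<pi> ! Suc j) \<noteq> f (\<pi> ! j))
      \<longrightarrow> odd (Suc j - i))"

end

theory Submission
  imports Defs "HOL-Combinatorics.Multiset_Permutations"
begin

(* Colour every element x by rho x, which is 0 or 1.  Because the labelling is canonical, labels of
   colour 0 are smaller than labels of colour 1; covering pairs have different colours, minimal
   elements have colour 0 and maximal ones colour r.  In a linear extension of a down-closed set Q,
   the maximal final run of letters of one colour a is an upward closed antichain B of Q; conversely,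
   any ordering of such a B may follow any linear extension of Q - B ending in the other colour, and
   whether the junction is a descent depends on a alone.  So W(-1) and the number of reverse
   alternating extensions with odd components both factor over these pairs, and induction on |Q|
   reduces the theorem to antichains.  For an antichain with m elements, splitting its orderings at
   the largest label shows that the sum of (-1)^des vanishes for even m and equals (-1)^((m-1)/2)
   times the number of alternating orderings for odd m. *)

lemma des_Nil [simp]: "des [] = 0"
  and des_singleton [simp]: "des [x] = 0"
  by (simp_all add: des_def)

lemma des_Cons_Cons: "des (x # y # zs) = of_bool (y < x) + des (y # zs)"
proof -
  let ?D = "\<lambda>xs. {i. Suc i < length xs \<and> xs ! Suc i < xs ! i}"
  have "?D (x # y # zs) = (if y < x then insert 0 else id) (Suc ` ?D (y # zs))"
    by (auto simp: image_iff less_Suc_eq_0_disj)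
  moreover have "0 \<notin> Suc ` ?D (y # zs)" by auto
  ultimately show ?thesis
    unfolding des_def by (simp add: card_image)
qed

lemma des_Cons: "des (x # ys) = of_bool (ys \<noteq> [] \<and> hd ys < x) + des ys"
  by (cases ys) (simp_all add: des_Cons_Cons)

lemma des_append:
  "des (xs @ ys) = des xs + des ys + of_bool (xs \<noteq> [] \<and> ys \<noteq> [] \<and> hd ys < last xs)"
  by (induction xs) (auto simp: des_Cons)

lemma des_complement:
  assumes "distinct xs" and "\<forall>x\<in>set xs. x \<le> K"
  shows "des (map (\<lambda>x. K - x) xs) + des xs = length xs - 1"
  using assms by (induction xs rule: induct_list012) (auto simp: des_Cons_Cons)

fun alternating :: "bool \<Rightarrow> nat list \<Rightarrow> bool" where
  "alternating up (x # y # zs) \<longleftrightarrow> (if up then x < y else y < x) \<and> alternating (\<not> up) (y # zs)"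
| "alternating up _ \<longleftrightarrow> True"

lemma alternating_iff_nth:
  "alternating up xs \<longleftrightarrow>
     (\<forall>i. Suc i < length xs \<longrightarrow> (if even i = up then xs ! i < xs ! Suc i else xs ! Suc i < xs ! i))"
proof (induction up xs rule: alternating.induct)
  case (1 up x y zs)
  show ?case
    unfolding alternating.simps(1) 1 by (auto simp: All_less_Suc2)
qed auto

lemma reverse_alternating_iff: "reverse_alternating xs \<longleftrightarrow> alternating True xs"
  by (simp add: reverse_alternating_def alternating_iff_nth)

lemma alternating_Cons:
  "alternating up (x # ys) \<longleftrightarrow> (ys \<noteq> [] \<longrightarrow> (if up then x < hd ys else hd ys < x)) \<and> alternating (\<not> up) ys"
  by (cases ys) auto

lemma alternating_append:
  "alternating up (xs @ ys) \<longleftrightarrow> alternating up xs \<and> alternating (up = even (length xs)) ys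
     \<and> (xs \<noteq> [] \<and> ys \<noteq> [] \<longrightarrow> (if up = odd (length xs) then last xs < hd ys else hd ys < last xs))"
  by (induction xs arbitrary: up) (auto simp: alternating_Cons)

lemma alternating_complement:
  assumes "distinct xs" and "\<forall>x\<in>set xs. x \<le> K"
  shows "alternating up (map (\<lambda>x. K - x) xs) \<longleftrightarrow> alternating (\<not> up) xs"
  using assms by (induction up xs rule: alternating.induct) auto

definition maximal_run :: "(nat \<Rightarrow> int) \<Rightarrow> nat list \<Rightarrow> nat \<Rightarrow> nat \<Rightarrow> bool" where
  "maximal_run f xs i j \<longleftrightarrow> i \<le> j \<and> j < length xs
      \<and> (\<forall>k. i \<le> k \<and> k \<le> j \<longrightarrow> f (xs ! k) = f (xs ! i))
      \<and> (i = 0 \<or> f (xs ! (i - 1)) \<noteq> f (xs ! i))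
      \<and> (Suc j = length xs \<or> f (xs ! Suc j) \<noteq> f (xs ! j))"

lemma components_odd_iff_maximal_run:
  "components_odd f xs \<longleftrightarrow> (\<forall>i j. maximal_run f xs i j \<longrightarrow> odd (Suc j - i))"
  by (simp add: components_odd_def maximal_run_def)

context
  fixes f :: "nat \<Rightarrow> int" and xs ys :: "nat list" and a :: int
  assumes ys_nonempty: "ys \<noteq> []" and ys_color: "\<forall>y\<in>set ys. f y = a"
    and xs_last: "xs = [] \<or> f (last xs) \<noteq> a"
begin

private lemma color_append_right: "length xs \<le> k \<Longrightarrow> k < length xs + length ys \<Longrightarrow> f ((xs @ ys) ! k) = a"
  using ys_color by (simp add: nth_append)

private lemma color_append_border: "0 < length xs \<Longrightarrow> f ((xs @ ys) ! (length xs - 1)) \<noteq> a"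
  using xs_last nth_append_left[of "length xs - 1" xs ys] by (simp add: last_conv_nth)

lemma maximal_run_append_left:
  assumes "j < length xs"
  shows "maximal_run f (xs @ ys) i j \<longleftrightarrow> maximal_run f xs i j"
proof
  assume "maximal_run f (xs @ ys) i j"
  then have "i \<le> j" and const: "\<And>k. i \<le> k \<Longrightarrow> k \<le> j \<Longrightarrow> f ((xs @ ys) ! k) = f ((xs @ ys) ! i)"
    and start: "i = 0 \<or> f ((xs @ ys) ! (i - 1)) \<noteq> f ((xs @ ys) ! i)"
    and stop: "Suc j = length xs + length ys \<or> f ((xs @ ys) ! Suc j) \<noteq> f ((xs @ ys) ! j)"
    unfolding maximal_run_def length_append by blast+
  have "\<forall>k. i \<le> k \<and> k \<le> j \<longrightarrow> f (xs ! k) = f (xs ! i)"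
    using const nth_append_left[of _ xs ys] \<open>i \<le> j\<close> assms by (metis le_less_trans)
  moreover have "i = 0 \<or> f (xs ! (i - 1)) \<noteq> f (xs ! i)"
    using start nth_append_left[of _ xs ys] \<open>i \<le> j\<close> assms by auto
  moreover have "Suc j = length xs \<or> f (xs ! Suc j) \<noteq> f (xs ! j)"
    using stop nth_append_left[of j xs ys] nth_append_left[of "Suc j" xs ys] assms
    by (cases "Suc j = length xs") auto
  ultimately show "maximal_run f xs i j"
    unfolding maximal_run_def using \<open>i \<le> j\<close> assms by blast
next
  assume "maximal_run f xs i j"
  then have "i \<le> j" and const: "\<And>k. i \<le> k \<Longrightarrow> k \<le> j \<Longrightarrow> f (xs ! k) = f (xs ! i)"
    and start: "i = 0 \<or> f (xs ! (i - 1)) \<noteq> f (xs ! i)"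
    and stop: "Suc j = length xs \<or> f (xs ! Suc j) \<noteq> f (xs ! j)"
    unfolding maximal_run_def by blast+
  have const': "\<forall>k. i \<le> k \<and> k \<le> j \<longrightarrow> f ((xs @ ys) ! k) = f ((xs @ ys) ! i)"
    using const nth_append_left[of _ xs ys] \<open>i \<le> j\<close> assms by (metis le_less_trans)
  have start': "i = 0 \<or> f ((xs @ ys) ! (i - 1)) \<noteq> f ((xs @ ys) ! i)"
    using start nth_append_left[of _ xs ys] \<open>i \<le> j\<close> assms by auto
  have "f ((xs @ ys) ! Suc j) \<noteq> f ((xs @ ys) ! j)" if "Suc j = length xs"
  proof -
    have "f ((xs @ ys) ! Suc j) = a"
      using that color_append_right ys_nonempty by simp
    moreover have "f ((xs @ ys) ! j) \<noteq> a"
      using that color_append_border by (metis diff_Suc_1 zero_less_Suc)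
    ultimately show ?thesis
      by simp
  qed
  then have stop': "Suc j = length (xs @ ys) \<or> f ((xs @ ys) ! Suc j) \<noteq> f ((xs @ ys) ! j)"
    using stop nth_append_left[of j xs ys] nth_append_left[of "Suc j" xs ys] assms
    by (cases "Suc j = length xs") auto
  have "j < length (xs @ ys)"
    using assms by simp
  then show "maximal_run f (xs @ ys) i j"
    unfolding maximal_run_def using \<open>i \<le> j\<close> const' start' stop' by blast
qed

lemma maximal_run_append_right:
  assumes "length xs \<le> j"
  shows "maximal_run f (xs @ ys) i j \<longleftrightarrow> i = length xs \<and> j = length xs + length ys - 1"
proof
  assume "maximal_run f (xs @ ys) i j"
  then have ij: "i \<le> j" "j < length xs + length ys"
    and const: "\<And>k. i \<le> k \<Longrightarrow> k \<le> j \<Longrightarrow> f ((xs @ ys) ! k) = f ((xs @ ys) ! i)"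
    and start: "i = 0 \<or> f ((xs @ ys) ! (i - 1)) \<noteq> f ((xs @ ys) ! i)"
    and stop: "Suc j = length xs + length ys \<or> f ((xs @ ys) ! Suc j) \<noteq> f ((xs @ ys) ! j)"
    unfolding maximal_run_def length_append by blast+
  have "\<not> i < length xs"
    using const[of "length xs - 1"] const[of "length xs"] color_append_border
      color_append_right[of "length xs"] assms ij ys_nonempty by fastforce
  moreover have "\<not> length xs < i"
  proof
    assume "length xs < i"
    then have "f ((xs @ ys) ! i) = a" and "f ((xs @ ys) ! (i - 1)) = a"
      using color_append_right[of i] color_append_right[of "i - 1"] ij by simp_all
    then show False
      using start \<open>length xs < i\<close> by simp
  qed
  moreover have "j = length xs + length ys - 1"
    using stop color_append_right[of j] color_append_right[of "Suc j"] assms ij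
    by (cases "Suc j < length xs + length ys") auto
  ultimately show "i = length xs \<and> j = length xs + length ys - 1"
    by simp
next
  assume ij: "i = length xs \<and> j = length xs + length ys - 1"
  moreover have "0 < length ys"
    using ys_nonempty by simp
  ultimately have bounds: "i \<le> j" "Suc j = length (xs @ ys)"
    by (auto simp del: length_greater_0_conv)
  have color: "f ((xs @ ys) ! k) = a" if "i \<le> k" "k \<le> j" for k
    using that bounds ij color_append_right by simp
  have "i = 0 \<or> f ((xs @ ys) ! (i - 1)) \<noteq> f ((xs @ ys) ! i)"
    using color_append_border ij color[of i] bounds by auto
  then show "maximal_run f (xs @ ys) i j"
    unfolding maximal_run_def using bounds color by auto
qed

lemma components_odd_append:
  "components_odd f (xs @ ys) \<longleftrightarrow> components_odd f xs \<and> odd (length ys)"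
proof -
  have "maximal_run f (xs @ ys) i j \<longleftrightarrow>
          maximal_run f xs i j \<or> (i = length xs \<and> j = length xs + length ys - 1)" for i j
  proof (cases "j < length xs")
    case True
    moreover have "length xs \<le> length xs + length ys - 1"
      using ys_nonempty by (cases ys) auto
    ultimately show ?thesis
      using maximal_run_append_left[OF True] by auto
  next
    case False
    moreover have "maximal_run f xs i j \<Longrightarrow> j < length xs"
      unfolding maximal_run_def by blast
    ultimately show ?thesis
      using maximal_run_append_right[of j i] by auto
  qed
  moreover have "odd (Suc (length xs + length ys - 1) - length xs) \<longleftrightarrow> odd (length ys)"
    using ys_nonempty by (simp add: Suc_diff_le)
  ultimately show ?thesis
    unfolding components_odd_iff_maximal_run by blast
qed

end

(* The relation the theorem asserts between s = W(-1) and the count t, with d = p - 1 - r. *)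
definition cd_related :: "int \<Rightarrow> int \<Rightarrow> int \<Rightarrow> bool" where
  "cd_related d s t \<longleftrightarrow> (if even d then s = (-1) ^ nat (d div 2) * t else s = 0 \<and> t = 0)"

lemma cd_related_sum:
  assumes "\<And>i. i \<in> I \<Longrightarrow> cd_related d (s i) (t i)"
  shows "cd_related d (\<Sum>i\<in>I. s i) (\<Sum>i\<in>I. t i)"
  using assms by (cases "even d") (simp_all add: cd_related_def sum_distrib_left)

lemma cd_related_mult:
  assumes "cd_related d1 s1 t1" "cd_related d2 s2 t2" "d1 \<ge> -1" "d2 \<ge> -1"
  shows "cd_related (d1 + d2 + 2 * int k) ((-1) ^ k * s1 * s2) (t1 * t2)"
proof (cases "even d1 \<and> even d2")
  case True
  then have "d1 \<ge> 0" "d2 \<ge> 0"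
    using assms(3,4) by presburger+
  then have "nat ((d1 + d2 + 2 * int k) div 2) = nat (d1 div 2) + nat (d2 div 2) + k"
    using True by (auto elim!: evenE simp: nat_add_distrib)
  then show ?thesis
    using True assms(1,2) by (simp add: cd_related_def power_add)
next
  case False
  then show ?thesis
    using assms(1,2) by (auto simp: cd_related_def split: if_splits)
qed

lemma cd_related_even_factor: "cd_related d s t \<Longrightarrow> cd_related d s (of_bool (even d) * t)"
  by (simp add: cd_related_def)

lemma cd_related_CD_value:
  assumes "cd_related d s t" "d \<ge> -1"
  shows "(if odd d then 0 else (-1) ^ nat \<bar>d div 2\<bar> * s) = t"
proof (cases "even d")
  case True
  then have "\<bar>d div 2\<bar> = d div 2"
    using assms(2) by presburger
  then show ?thesis
    using True assms(1) by (simp add: cd_related_def flip: power_add mult_2)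
qed (use assms in \<open>simp add: cd_related_def\<close>)

lemma sum_reindex_Sigma_product:
  assumes "bij_betw h (SIGMA i:I. A i \<times> B i) T" "finite I"
    and "\<And>i. i \<in> I \<Longrightarrow> finite (A i)" "\<And>i. i \<in> I \<Longrightarrow> finite (B i)"
  shows "(\<Sum>t\<in>T. F t) = (\<Sum>i\<in>I. \<Sum>a\<in>A i. \<Sum>b\<in>B i. F (h (i, a, b)))"
proof -
  have "(\<Sum>t\<in>T. F t) = (\<Sum>q\<in>(SIGMA i:I. A i \<times> B i). F (h q))"
    by (rule sum.reindex_bij_betw[OF assms(1), symmetric])
  also have "\<dots> = (\<Sum>i\<in>I. \<Sum>p\<in>A i \<times> B i. F (h (i, p)))"
    using assms(2-4) by (subst sum.Sigma) auto
  also have "\<dots> = (\<Sum>i\<in>I. \<Sum>a\<in>A i. \<Sum>b\<in>B i. F (h (i, a, b)))"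
    by (simp add: sum.cartesian_product)
  finally show ?thesis .
qed

lemma double_sum_factor:
  fixes c :: "'c::comm_semiring_0"
  assumes "\<And>a b. a \<in> A \<Longrightarrow> b \<in> B \<Longrightarrow> F a b = c * (f a * g b)"
  shows "(\<Sum>a\<in>A. \<Sum>b\<in>B. F a b) = c * (sum f A * sum g B)"
proof -
  have "(\<Sum>a\<in>A. \<Sum>b\<in>B. F a b) = (\<Sum>a\<in>A. \<Sum>b\<in>B. c * (f a * g b))"
    using assms by simp
  also have "\<dots> = c * (sum f A * sum g B)"
    by (subst sum_product) (simp add: sum_distrib_left)
  finally show ?thesis .
qed

lemma permutations_of_set_split_at:
  assumes "n \<in> B"
  shows "bij_betw (\<lambda>(C, \<alpha>, \<beta>). \<alpha> @ n # \<beta>)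
           (SIGMA C:Pow (B - {n}). permutations_of_set C \<times> permutations_of_set (B - {n} - C))
           (permutations_of_set B)"
    (is "bij_betw ?h ?S _")
proof -
  have parts: "C = set \<alpha> \<and> n \<notin> set \<alpha> \<and> n \<notin> set \<beta>" if "(C, \<alpha>, \<beta>) \<in> ?S" for C \<alpha> \<beta>
    using that by (auto simp: permutations_of_set_def)
  have "inj_on ?h ?S"
  proof (rule inj_onI)
    fix x y assume "x \<in> ?S" "y \<in> ?S" "?h x = ?h y"
    moreover obtain C \<alpha> \<beta> C' \<alpha>' \<beta>' where "x = (C, \<alpha>, \<beta>)" "y = (C', \<alpha>', \<beta>')"
      by (cases x, cases y) auto
    ultimately show "x = y"
      using parts[of C \<alpha> \<beta>] parts[of C' \<alpha>' \<beta>'] by (simp add: append_Cons_eq_iff)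
  qed
  moreover have "?h ` ?S = permutations_of_set B"
  proof (intro equalityI subsetI)
    fix \<sigma> assume "\<sigma> \<in> ?h ` ?S"
    then obtain C \<alpha> \<beta> where "C \<subseteq> B - {n}" "\<alpha> \<in> permutations_of_set C"
        "\<beta> \<in> permutations_of_set (B - {n} - C)" "\<sigma> = \<alpha> @ n # \<beta>"
      by auto
    then show "\<sigma> \<in> permutations_of_set B"
      using assms by (auto simp: permutations_of_set_def)
  next
    fix \<sigma> assume "\<sigma> \<in> permutations_of_set B"
    then have \<sigma>: "set \<sigma> = B" "distinct \<sigma>"
      by (auto dest: permutations_of_setD)
    then obtain \<alpha> \<beta> where split: "\<sigma> = \<alpha> @ n # \<beta>"
      using assms by (metis split_list)
    with \<sigma> have "(set \<alpha>, \<alpha>, \<beta>) \<in> ?S"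
      by (auto simp: permutations_of_set_def)
    then show "\<sigma> \<in> ?h ` ?S"
      by (rule image_eqI[rotated]) (simp add: split)
  qed
  ultimately show ?thesis
    unfolding bij_betw_def ..
qed

lemma sum_permutations_of_set_split_at:
  assumes "finite B" "n \<in> B"
  shows "(\<Sum>\<sigma>\<in>permutations_of_set B. F \<sigma>) =
    (\<Sum>C\<in>Pow (B - {n}). \<Sum>\<alpha>\<in>permutations_of_set C. \<Sum>\<beta>\<in>permutations_of_set (B - {n} - C). F (\<alpha> @ n # \<beta>))"
  using sum_reindex_Sigma_product[OF permutations_of_set_split_at[OF assms(2)]] assms(1) by simp

lemma des_insert_max:
  assumes "\<forall>x\<in>set xs \<union> set ys. x < m"
  shows "des (xs @ m # ys) = des xs + des ys + of_bool (ys \<noteq> [])"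
proof -
  have "xs \<noteq> [] \<Longrightarrow> last xs < m" "ys \<noteq> [] \<Longrightarrow> hd ys < m"
    using assms by auto
  then show ?thesis
    by (auto simp: des_append des_Cons)
qed

lemma alternating_insert_max:
  assumes "\<forall>x\<in>set xs \<union> set ys. x < m"
  shows "alternating True (xs @ m # ys) \<longleftrightarrow>
           alternating True xs \<and> alternating True ys \<and> (xs \<noteq> [] \<or> ys \<noteq> [] \<longrightarrow> odd (length xs))"
proof -
  have "xs \<noteq> [] \<Longrightarrow> last xs < m" "ys \<noteq> [] \<Longrightarrow> hd ys < m"
    using assms by auto
  then show ?thesis
    by (cases "xs = []"; cases ys) (auto simp: alternating_append)
qed

definition sign_des_sum :: "('a \<Rightarrow> nat) \<Rightarrow> 'a set \<Rightarrow> int" where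
  "sign_des_sum lab B = (\<Sum>\<sigma>\<in>permutations_of_set B. (-1) ^ des (map lab \<sigma>))"

definition alternating_count :: "('a \<Rightarrow> nat) \<Rightarrow> bool \<Rightarrow> 'a set \<Rightarrow> int" where
  "alternating_count lab up B = (\<Sum>\<sigma>\<in>permutations_of_set B. of_bool (alternating up (map lab \<sigma>)))"

lemma sign_des_sum_empty [simp]: "sign_des_sum lab {} = 1"
  and alternating_count_empty [simp]: "alternating_count lab up {} = 1"
  by (simp_all add: sign_des_sum_def alternating_count_def)

lemma sign_des_sum_split_at_max:
  assumes "finite B" "n \<in> B" "\<forall>x\<in>B - {n}. lab x < lab n"
  shows "sign_des_sum lab B = (\<Sum>C\<in>Pow (B - {n}).
           (if B - {n} - C = {} then 1 else -1) * (sign_des_sum lab C * sign_des_sum lab (B - {n} - C)))"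
  unfolding sign_des_sum_def sum_permutations_of_set_split_at[OF assms(1,2)]
proof (intro sum.cong refl double_sum_factor)
  fix C \<alpha> \<beta>
  assume "C \<in> Pow (B - {n})" "\<alpha> \<in> permutations_of_set C" "\<beta> \<in> permutations_of_set (B - {n} - C)"
  then have "set \<alpha> = C" "set \<beta> = B - {n} - C"
    by (auto dest: permutations_of_setD)
  then have "\<forall>x\<in>set (map lab \<alpha>) \<union> set (map lab \<beta>). x < lab n"
    using \<open>C \<in> Pow (B - {n})\<close> assms(3) by auto
  moreover have "\<beta> = [] \<longleftrightarrow> B - {n} - C = {}"
    using \<open>set \<beta> = B - {n} - C\<close> by (metis set_empty)
  ultimately show "(-1::int) ^ des (map lab (\<alpha> @ n # \<beta>)) =
      (if B - {n} - C = {} then 1 else -1) * ((-1) ^ des (map lab \<alpha>) * (-1) ^ des (map lab \<beta>))"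
    by (simp add: des_insert_max power_add)
qed

lemma alternating_count_split_at_max:
  assumes "finite B" "n \<in> B" "\<forall>x\<in>B - {n}. lab x < lab n"
  shows "alternating_count lab True B = (\<Sum>C\<in>Pow (B - {n}).
           of_bool (C \<noteq> {} \<or> B - {n} - C \<noteq> {} \<longrightarrow> odd (card C))
           * (alternating_count lab True C * alternating_count lab True (B - {n} - C)))"
  unfolding alternating_count_def sum_permutations_of_set_split_at[OF assms(1,2)]
proof (intro sum.cong refl double_sum_factor)
  fix C \<alpha> \<beta>
  assume "C \<in> Pow (B - {n})" "\<alpha> \<in> permutations_of_set C" "\<beta> \<in> permutations_of_set (B - {n} - C)"
  then have "set \<alpha> = C" "set \<beta> = B - {n} - C" "length \<alpha> = card C"
    by (auto dest: permutations_of_setD length_finite_permutations_of_set)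
  then have "\<forall>x\<in>set (map lab \<alpha>) \<union> set (map lab \<beta>). x < lab n"
    using \<open>C \<in> Pow (B - {n})\<close> assms(3) by auto
  moreover have "\<alpha> = [] \<longleftrightarrow> C = {}" "\<beta> = [] \<longleftrightarrow> B - {n} - C = {}"
    using \<open>set \<alpha> = C\<close> \<open>set \<beta> = B - {n} - C\<close> by (metis set_empty)+
  ultimately show "(of_bool (alternating True (map lab (\<alpha> @ n # \<beta>))) :: int) =
      of_bool (C \<noteq> {} \<or> B - {n} - C \<noteq> {} \<longrightarrow> odd (card C)) *
      (of_bool (alternating True (map lab \<alpha>)) * of_bool (alternating True (map lab \<beta>)))"
    using \<open>length \<alpha> = card C\<close> by (simp add: alternating_insert_max) blast
qed

lemma exists_max_label:
  fixes lab :: "'a \<Rightarrow> 'b::linorder"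
  assumes "finite B" "B \<noteq> {}" "inj_on lab B"
  obtains n where "n \<in> B" "\<forall>x\<in>B - {n}. lab x < lab n"
proof -
  have "Max (lab ` B) \<in> lab ` B"
    using assms(1,2) by simp
  then obtain n where n: "n \<in> B" "lab n = Max (lab ` B)"
    by (metis imageE)
  moreover have "\<forall>x\<in>B - {n}. lab x < lab n"
    using n assms(1,3) by (auto simp: inj_on_def order.strict_iff_order)
  ultimately show ?thesis
    using that by blast
qed

lemma cd_related_split_term:
  assumes "finite C" "finite D" "even (card C + card D)"
    and "C \<noteq> {} \<Longrightarrow> cd_related (int (card C) - 1) (s C) (of_bool (odd (card C)) * t C)"
    and "D \<noteq> {} \<Longrightarrow> cd_related (int (card D) - 1) (s D) (of_bool (odd (card D)) * t D)"
    and "s {} = 1" "t {} = 1"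
  shows "cd_related (int (card C + card D)) ((if D = {} then 1 else -1) * (s C * s D))
           (of_bool (C \<noteq> {} \<or> D \<noteq> {} \<longrightarrow> odd (card C)) * (t C * t D))"
proof -
  consider "C = {}" "D = {}" | "C = {}" "D \<noteq> {}" | "C \<noteq> {}" "D = {}" | "C \<noteq> {}" "D \<noteq> {}"
    by blast
  then show ?thesis
  proof cases
    case 2
    then show ?thesis
      using assms(3,5,6) by (simp add: cd_related_def)
  next
    case 3
    then show ?thesis
      using assms(3,4,7) by (simp add: cd_related_def)
  next
    case 4
    then have "cd_related ((int (card C) - 1) + (int (card D) - 1) + 2 * int 1) ((-1) ^ 1 * s C * s D)
        (of_bool (odd (card C)) * t C * (of_bool (odd (card D)) * t D))"
      using assms(4,5) by (intro cd_related_mult) auto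
    moreover have "odd (card D) \<longleftrightarrow> odd (card C)"
      using assms(3) by presburger
    ultimately show ?thesis
      using 4 by (cases "odd (card C)") (simp_all add: mult_ac)
  qed (use assms(6,7) in \<open>simp add: cd_related_def\<close>)
qed

lemma sign_des_sum_odd_step:
  assumes B: "finite B" "n \<in> B" "\<forall>x\<in>B - {n}. lab x < lab n" and "odd (card B)"
    and IH: "\<And>C. C \<subseteq> B - {n} \<Longrightarrow> C \<noteq> {} \<Longrightarrow> cd_related (int (card C) - 1) (sign_des_sum lab C)
               (of_bool (odd (card C)) * alternating_count lab True C)"
  shows "cd_related (int (card B) - 1) (sign_des_sum lab B) (alternating_count lab True B)"
  unfolding sign_des_sum_split_at_max[OF B] alternating_count_split_at_max[OF B]
proof (rule cd_related_sum)
  fix C assume "C \<in> Pow (B - {n})"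
  then have C: "C \<subseteq> B - {n}" "B - {n} - C \<subseteq> B - {n}"
    by auto
  have "finite C" "card C \<le> card (B - {n})"
    using C(1) B(1) by (auto intro: finite_subset card_mono)
  then have "card C + card (B - {n} - C) = card B - 1"
    using C(1) B(1,2) by (simp add: card_Diff_subset)
  moreover have "card B \<ge> 1"
    using B(1,2) by (auto simp: Suc_le_eq card_gt_0_iff)
  ultimately have d_eq: "int (card B) - 1 = int (card C + card (B - {n} - C))"
    by simp
  have "even (card C + card (B - {n} - C))"
    using \<open>card C + card (B - {n} - C) = card B - 1\<close> \<open>odd (card B)\<close> \<open>card B \<ge> 1\<close> by simp
  then show "cd_related (int (card B) - 1)
      ((if B - {n} - C = {} then 1 else -1) * (sign_des_sum lab C * sign_des_sum lab (B - {n} - C)))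
      (of_bool (C \<noteq> {} \<or> B - {n} - C \<noteq> {} \<longrightarrow> odd (card C))
        * (alternating_count lab True C * alternating_count lab True (B - {n} - C)))"
    unfolding d_eq using IH[OF C(1)] IH[OF C(2)] B(1) \<open>finite C\<close>
    by (intro cd_related_split_term) auto
qed

lemma sign_des_sum_even_step:
  assumes B: "finite B" "n \<in> B" "\<forall>x\<in>B - {n}. lab x < lab n" and "even (card B)"
    and IH: "\<And>C. C \<subseteq> B - {n} \<Longrightarrow> C \<noteq> {} \<Longrightarrow> even (card C) \<Longrightarrow> sign_des_sum lab C = 0"
  shows "sign_des_sum lab B = 0"
proof -
  let ?B' = "B - {n}"
  let ?term = "\<lambda>C. (if ?B' - C = {} then 1 else -1) * (sign_des_sum lab C * sign_des_sum lab (?B' - C))"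
  have "card B = Suc (card ?B')"
    using card_Suc_Diff1[OF B(1,2)] by simp
  have "?B' \<noteq> {}"
  proof
    assume empty: "?B' = {}"
    have "card B = 1"
      using \<open>card B = Suc (card ?B')\<close> unfolding empty by simp
    then show False
      using \<open>even (card B)\<close> by simp
  qed
  have "?term C = 0" if "C \<in> Pow ?B' - {{}, ?B'}" for C
  proof -
    have "card C + card (?B' - C) = card ?B'"
      using that B(1) finite_subset[of C ?B'] by (simp add: card_Diff_subset card_mono)
    then have "even (card C) \<or> even (card (?B' - C))"
      using \<open>card B = Suc (card ?B')\<close> \<open>even (card B)\<close> by presburger
    then show ?thesis
      using that IH[of C] IH[of "?B' - C"] by auto
  qed
  \<comment> \<open>Only the terms for C = {} and C = B - {n} survive, and they cancel.\<close>
  then have "sign_des_sum lab B = (\<Sum>C\<in>{{}, ?B'}. ?term C)"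
    unfolding sign_des_sum_split_at_max[OF B]
    by (intro sum.mono_neutral_right) (use B(1) in auto)
  also have "\<dots> = 0"
    using \<open>?B' \<noteq> {}\<close> by simp
  finally show ?thesis .
qed

lemma sign_des_sum_cd_related_up:
  assumes "finite B" "inj_on lab B" "B \<noteq> {}"
  shows "cd_related (int (card B) - 1) (sign_des_sum lab B)
           (of_bool (odd (card B)) * alternating_count lab True B)"
  using assms
proof (induction "card B" arbitrary: B rule: less_induct)
  case less
  obtain n where n: "n \<in> B" "\<forall>x\<in>B - {n}. lab x < lab n"
    using exists_max_label[OF less.prems(1,3,2)] .
  have IH: "cd_related (int (card C) - 1) (sign_des_sum lab C)
              (of_bool (odd (card C)) * alternating_count lab True C)" if "C \<subseteq> B - {n}" "C \<noteq> {}" for C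
  proof (rule less.hyps)
    show "card C < card B"
      using that less.prems(1) n(1) by (auto intro: psubset_card_mono)
  qed (use that less.prems in \<open>auto intro: finite_subset inj_on_subset\<close>)
  show ?case
  proof (cases "odd (card B)")
    case True
    then show ?thesis
      using sign_des_sum_odd_step[OF less.prems(1) n True IH] by simp
  next
    case False
    have "sign_des_sum lab B = 0"
      using IH False by (intro sign_des_sum_even_step[OF less.prems(1) n]) (auto simp: cd_related_def)
    then show ?thesis
      using False by (simp add: cd_related_def)
  qed
qed

lemma sign_des_sum_complement:
  assumes "inj_on lab B" "\<forall>x\<in>B. lab x \<le> K"
  shows "sign_des_sum (\<lambda>x. K - lab x) B = (-1) ^ (card B - 1) * sign_des_sum lab B"
  unfolding sign_des_sum_def sum_distrib_left
proof (rule sum.cong[OF refl])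
  fix \<sigma> assume \<sigma>: "\<sigma> \<in> permutations_of_set B"
  then have "distinct (map lab \<sigma>)" "\<forall>x\<in>set (map lab \<sigma>). x \<le> K" "length (map lab \<sigma>) = card B"
    using assms by (auto simp: permutations_of_set_def distinct_map distinct_card inj_on_subset)
  then have "des (map (\<lambda>x. K - lab x) \<sigma>) + des (map lab \<sigma>) = card B - 1"
    using des_complement[of "map lab \<sigma>" K] by (simp add: comp_def)
  moreover have "(-1::int) ^ a = (-1) ^ (a + b) * (-1) ^ b" for a b :: nat
    by (simp add: power_add mult.assoc flip: power_mult_distrib)
  ultimately show "(-1::int) ^ des (map (\<lambda>x. K - lab x) \<sigma>) = (-1) ^ (card B - 1) * (-1) ^ des (map lab \<sigma>)"
    by metis
qed

lemma alternating_count_complement: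
  assumes "inj_on lab B" "\<forall>x\<in>B. lab x \<le> K"
  shows "alternating_count (\<lambda>x. K - lab x) up B = alternating_count lab (\<not> up) B"
  unfolding alternating_count_def
proof (rule sum.cong[OF refl])
  fix \<sigma> assume \<sigma>: "\<sigma> \<in> permutations_of_set B"
  then have "distinct (map lab \<sigma>)" "\<forall>x\<in>set (map lab \<sigma>). x \<le> K"
    using assms by (auto simp: permutations_of_set_def distinct_map inj_on_subset)
  then show "(of_bool (alternating up (map (\<lambda>x. K - lab x) \<sigma>)) :: int) =
      of_bool (alternating (\<not> up) (map lab \<sigma>))"
    using alternating_complement[of "map lab \<sigma>" K up] by (simp add: comp_def)
qed

lemma sign_des_sum_cd_related:
  assumes "finite B" "inj_on lab B" "B \<noteq> {}"
  shows "cd_related (int (card B) - 1) (sign_des_sum lab B)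
           (of_bool (odd (card B)) * alternating_count lab up B)"
proof (cases up)
  case True
  then show ?thesis
    using sign_des_sum_cd_related_up[OF assms] by simp
next
  case False
  \<comment> \<open>Reflecting the labels exchanges ascents and descents.\<close>
  define K where "K = Max (lab ` B)"
  have bound: "\<forall>x\<in>B. lab x \<le> K"
    using assms(1) by (simp add: K_def)
  have "inj_on (\<lambda>x. K - lab x) B"
  proof (rule inj_onI)
    fix x y assume "x \<in> B" "y \<in> B" "K - lab x = K - lab y"
    then have "lab x = lab y"
      using bound by (metis diff_diff_cancel)
    then show "x = y"
      using inj_onD[OF assms(2)] \<open>x \<in> B\<close> \<open>y \<in> B\<close> by blast
  qed
  then have "cd_related (int (card B) - 1) ((-1) ^ (card B - 1) * sign_des_sum lab B)
               (of_bool (odd (card B)) * alternating_count lab up B)"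
    using sign_des_sum_cd_related_up[of B "\<lambda>x. K - lab x"] assms False
    by (simp add: sign_des_sum_complement[OF assms(2) bound] alternating_count_complement[OF assms(2) bound])
  then show ?thesis
    by (cases "odd (card B)") (auto simp: cd_related_def)
qed

lemma poset_on_dual: "poset_on P leq \<Longrightarrow> poset_on P (\<lambda>x y. leq y x)"
  unfolding poset_on_def by blast

lemma poset_on_finite: "poset_on P leq \<Longrightarrow> finite P"
  unfolding poset_on_def by blast

lemma poset_on_refl: "poset_on P leq \<Longrightarrow> x \<in> P \<Longrightarrow> leq x x"
  unfolding poset_on_def by blast

lemma poset_on_antisym: "poset_on P leq \<Longrightarrow> x \<in> P \<Longrightarrow> y \<in> P \<Longrightarrow> leq x y \<Longrightarrow> leq y x \<Longrightarrow> x = y"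
  unfolding poset_on_def by blast

lemma poset_on_trans:
  "poset_on P leq \<Longrightarrow> x \<in> P \<Longrightarrow> y \<in> P \<Longrightarrow> z \<in> P \<Longrightarrow> leq x y \<Longrightarrow> leq y z \<Longrightarrow> leq x z"
  unfolding poset_on_def by blast

lemma less_in_trans:
  assumes "poset_on P leq" "x \<in> P" "y \<in> P" "z \<in> P" "less_in leq x y" "less_in leq y z"
  shows "less_in leq x z"
proof -
  have "leq x y" "leq y z" "x \<noteq> y"
    using assms(5,6) by (auto simp: less_in_def)
  moreover have "x \<noteq> z"
    using poset_on_antisym[OF assms(1,2,3)] calculation by auto
  ultimately show ?thesis
    using poset_on_trans[OF assms(1-4)] by (simp add: less_in_def)
qed

lemma exists_minimal_in_subset:
  assumes po: "poset_on P leq" and T: "T \<subseteq> P" "T \<noteq> {}"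
  shows "\<exists>m\<in>T. \<forall>b\<in>T. \<not> less_in leq b m"
proof -
  let ?below = "\<lambda>m. {y \<in> P. less_in leq y m}"
  obtain k where "k \<in> T"
    using T(2) by blast
  then obtain m where m: "m \<in> T" and least: "\<And>b. b \<in> T \<Longrightarrow> card (?below m) \<le> card (?below b)"
    using ex_has_least_nat[of "\<lambda>x. x \<in> T" k "\<lambda>x. card (?below x)"] by auto
  have "\<not> less_in leq b m" if "b \<in> T" for b
  proof
    assume "less_in leq b m"
    have "?below b \<subseteq> ?below m"
    proof (rule subsetI)
      fix y assume "y \<in> ?below b"
      then show "y \<in> ?below m"
        using less_in_trans[OF po _ _ _ _ \<open>less_in leq b m\<close>, of y] T that m by auto
    qed
    moreover have "b \<in> ?below m - ?below b"
      using \<open>less_in leq b m\<close> T that by (auto simp: less_in_def)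
    moreover have "finite (?below m)"
      using poset_on_finite[OF po] by simp
    ultimately have "card (?below b) < card (?below m)"
      by (intro psubset_card_mono) auto
    then show False
      using least[OF that] by simp
  qed
  then show ?thesis
    using m by blast
qed

lemma exists_maximal_in_subset:
  assumes "poset_on P leq" "T \<subseteq> P" "T \<noteq> {}"
  shows "\<exists>m\<in>T. \<forall>b\<in>T. \<not> less_in leq m b"
proof -
  obtain m where "m \<in> T" "\<forall>b\<in>T. \<not> less_in (\<lambda>x y. leq y x) b m"
    using exists_minimal_in_subset[OF poset_on_dual[OF assms(1)] assms(2,3)] by blast
  then show ?thesis
    by (auto simp: less_in_def)
qed

lemma sat_chain_subset: "sat_chain P leq xs \<Longrightarrow> set xs \<subseteq> P"
  by (simp add: sat_chain_def)

lemma sat_chain_Cons: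
  "sat_chain P leq (x # ys) \<longleftrightarrow>
     (if ys = [] then x \<in> P else covers P leq x (hd ys) \<and> sat_chain P leq ys)"
proof (cases ys)
  case (Cons y ys')
  have "(\<forall>i. Suc i < length (x # ys) \<longrightarrow> covers P leq ((x # ys) ! i) ((x # ys) ! Suc i)) \<longleftrightarrow>
          covers P leq x y \<and> (\<forall>i. Suc i < length ys \<longrightarrow> covers P leq (ys ! i) (ys ! Suc i))"
    using Cons by (auto simp: All_less_Suc2 simp del: nth_Cons_Suc)
  then show ?thesis
    using Cons by (auto simp: sat_chain_def covers_def)
qed (simp add: sat_chain_def)

lemma chain_weight_Cons:
  "chain_weight \<omega> (x # ys) = (if ys = [] then 0 else eps \<omega> x (hd ys) + chain_weight \<omega> ys)"
proof (cases ys)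
  case (Cons y ys')
  then show ?thesis
    unfolding chain_weight_def by (simp only: length_Cons diff_Suc_1 sum.lessThan_Suc_shift) simp
qed (simp add: chain_weight_def)

lemma sat_chain_join:
  "sat_chain P leq (xs @ y # zs) \<longleftrightarrow> sat_chain P leq (xs @ [y]) \<and> sat_chain P leq (y # zs)"
  by (induction xs) (auto simp: sat_chain_Cons hd_append covers_def)

lemma chain_weight_join:
  "chain_weight \<omega> (xs @ y # zs) = chain_weight \<omega> (xs @ [y]) + chain_weight \<omega> (y # zs)"
  by (induction xs) (auto simp: chain_weight_Cons hd_append)

lemma exists_cover_below:
  assumes po: "poset_on P leq" and "x \<in> P" "z \<in> P" "less_in leq x z"
  shows "\<exists>y. covers P leq x y \<and> leq y z"
proof -
  let ?T = "{y \<in> P. less_in leq x y \<and> leq y z}"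
  have "z \<in> ?T"
    using assms poset_on_refl[OF po] by simp
  then obtain y where y: "y \<in> ?T" and min: "\<forall>w\<in>?T. \<not> less_in leq w y"
    using exists_minimal_in_subset[OF po, of ?T] by blast
  have "\<not> (\<exists>w\<in>P. less_in leq x w \<and> less_in leq w y)"
  proof
    assume "\<exists>w\<in>P. less_in leq x w \<and> less_in leq w y"
    then obtain w where w: "w \<in> P" "less_in leq x w" "less_in leq w y"
      by blast
    then have "leq w z"
      using y poset_on_trans[OF po, of w y z] assms(3) by (auto simp: less_in_def)
    then show False
      using w min by blast
  qed
  then show ?thesis
    using y assms(2) by (auto simp: covers_def)
qed

lemma exists_sat_chain_between:
  assumes po: "poset_on P leq" and "x \<in> P" "z \<in> P" "leq x z"
  shows "\<exists>ys. sat_chain P leq (x # ys) \<and> last (x # ys) = z"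
  using assms(2,4)
proof (induction "card {y \<in> P. less_in leq x y \<and> leq y z}" arbitrary: x rule: less_induct)
  case less
  show ?case
  proof (cases "x = z")
    case True
    then show ?thesis
      using less.prems by (intro exI[of _ "[]"]) (simp add: sat_chain_Cons)
  next
    case False
    then obtain y where y: "covers P leq x y" "leq y z"
      using exists_cover_below[OF po less.prems(1) assms(3)] less.prems(2) by (auto simp: less_in_def)
    have "{w \<in> P. less_in leq y w \<and> leq w z} \<subset> {w \<in> P. less_in leq x w \<and> leq w z}"
    proof
      show "{w \<in> P. less_in leq y w \<and> leq w z} \<subseteq> {w \<in> P. less_in leq x w \<and> leq w z}"
        using y less.prems(1) less_in_trans[OF po, of x y] by (auto simp: covers_def)
      show "{w \<in> P. less_in leq y w \<and> leq w z} \<noteq> {w \<in> P. less_in leq x w \<and> leq w z}"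
        using y by (auto simp: covers_def less_in_def)
    qed
    then have "card {w \<in> P. less_in leq y w \<and> leq w z} < card {w \<in> P. less_in leq x w \<and> leq w z}"
      using poset_on_finite[OF po] by (intro psubset_card_mono) auto
    then obtain ys where "sat_chain P leq (y # ys)" "last (y # ys) = z"
      using less.hyps y by (auto simp: covers_def)
    then show ?thesis
      using y(1) by (intro exI[of _ "y # ys"]) (simp add: sat_chain_Cons)
  qed
qed

lemma exists_minimal_below:
  assumes po: "poset_on P leq" and "z \<in> P"
  shows "\<exists>m. minimal_in P leq m \<and> leq m z"
proof -
  let ?T = "{y \<in> P. leq y z}"
  have "z \<in> ?T"
    using assms poset_on_refl[OF po] by simp
  then obtain m where m: "m \<in> ?T" and min: "\<forall>w\<in>?T. \<not> less_in leq w m"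
    using exists_minimal_in_subset[OF po, of ?T] by blast
  have "\<not> less_in leq w m" if "w \<in> P" for w
    using that m min poset_on_trans[OF po, of w m z] assms(2) by (auto simp: less_in_def)
  then show ?thesis
    using m by (auto simp: minimal_in_def)
qed

lemma exists_maximal_above:
  assumes po: "poset_on P leq" and "z \<in> P"
  shows "\<exists>m. maximal_in P leq m \<and> leq z m"
proof -
  let ?T = "{y \<in> P. leq z y}"
  have "z \<in> ?T"
    using assms poset_on_refl[OF po] by simp
  then obtain m where m: "m \<in> ?T" and max: "\<forall>w\<in>?T. \<not> less_in leq m w"
    using exists_maximal_in_subset[OF po, of ?T] by blast
  have "\<not> less_in leq m w" if "w \<in> P" for w
    using that m max poset_on_trans[OF po, of z m w] assms(2) by (auto simp: less_in_def)
  then show ?thesis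
    using m by (auto simp: maximal_in_def)
qed

lemma exists_chain_from_minimal:
  assumes "poset_on P leq" "z \<in> P"
  shows "\<exists>xs. sat_chain P leq (xs @ [z]) \<and> minimal_in P leq (hd (xs @ [z]))"
proof -
  obtain m where m: "minimal_in P leq m" "leq m z"
    using exists_minimal_below[OF assms] by blast
  then obtain ys where ys: "sat_chain P leq (m # ys)" "last (m # ys) = z"
    using exists_sat_chain_between[OF assms(1) _ assms(2)] by (auto simp: minimal_in_def)
  define xs where "xs = butlast (m # ys)"
  have "xs @ [z] = m # ys"
    using append_butlast_last_id[of "m # ys"] ys(2) by (simp add: xs_def)
  then show ?thesis
    using ys(1) m(1) by (intro exI[of _ xs]) simp
qed

lemma exists_chain_to_maximal:
  assumes "poset_on P leq" "z \<in> P"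
  shows "\<exists>zs. sat_chain P leq (z # zs) \<and> maximal_in P leq (last (z # zs))"
proof -
  obtain m where m: "maximal_in P leq m" "leq z m"
    using exists_maximal_above[OF assms] by blast
  then have "m \<in> P"
    by (simp add: maximal_in_def)
  then obtain zs where "sat_chain P leq (z # zs)" "last (z # zs) = m"
    using exists_sat_chain_between[OF assms(1,2) _ m(2)] by blast
  then show ?thesis
    using m(1) by (intro exI[of _ zs]) simp
qed

context
  fixes P leq \<omega> r
  assumes po: "poset_on P leq" and graded: "sign_graded P leq \<omega> r"
begin

lemma chain_weight_through:
  assumes "sat_chain P leq (xs @ [z])" "minimal_in P leq (hd (xs @ [z]))"
    and "sat_chain P leq (z # zs)" "maximal_in P leq (last (z # zs))"
  shows "chain_weight \<omega> (xs @ [z]) + chain_weight \<omega> (z # zs) = r"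
proof -
  have "sat_chain P leq (xs @ z # zs)"
    using sat_chain_join[of P leq xs z zs] assms(1,3) by simp
  moreover have "hd (xs @ z # zs) = hd (xs @ [z])" "last (xs @ z # zs) = last (z # zs)"
    by (simp_all add: hd_append)
  ultimately have "max_chain P leq (xs @ z # zs)"
    using assms(2,4) by (simp add: max_chain_def)
  then have "chain_weight \<omega> (xs @ z # zs) = r"
    using graded by (simp add: sign_graded_def)
  then show ?thesis
    using chain_weight_join[of \<omega> xs z zs] by simp
qed

(* rho is well defined: chains from minimal elements to z all extend by the same chain from z to a
   maximal element, and the resulting maximal chains have weight r. *)
lemma rho_eq_chain_weight:
  assumes "sat_chain P leq (xs @ [z])" "minimal_in P leq (hd (xs @ [z]))"
  shows "rho P leq \<omega> z = chain_weight \<omega> (xs @ [z])"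
proof -
  let ?C = "\<lambda>ys. sat_chain P leq ys \<and> minimal_in P leq (hd ys) \<and> last ys = z"
  define ws where "ws = (SOME ys. ?C ys)"
  have "?C ws"
    unfolding ws_def using assms by (intro someI[of ?C "xs @ [z]"]) simp
  then have "ws \<noteq> []"
    by (simp add: sat_chain_def)
  then have "butlast ws @ [z] = ws"
    using append_butlast_last_id[of ws] \<open>?C ws\<close> by simp
  then have ws: "sat_chain P leq (butlast ws @ [z])" "minimal_in P leq (hd (butlast ws @ [z]))"
    using \<open>?C ws\<close> by simp_all
  have "z \<in> P"
    using sat_chain_subset[OF assms(1)] by simp
  then obtain zs where "sat_chain P leq (z # zs)" "maximal_in P leq (last (z # zs))"
    using exists_chain_to_maximal[OF po] by blast
  then have "chain_weight \<omega> (butlast ws @ [z]) = chain_weight \<omega> (xs @ [z])"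
    using chain_weight_through[OF ws] chain_weight_through[OF assms] by fastforce
  then show ?thesis
    using \<open>butlast ws @ [z] = ws\<close> by (simp add: rho_def ws_def)
qed

lemma rho_minimal: "minimal_in P leq z \<Longrightarrow> rho P leq \<omega> z = 0"
  using rho_eq_chain_weight[of "[]" z] by (simp add: sat_chain_def minimal_in_def chain_weight_def)

lemma rho_maximal:
  assumes "maximal_in P leq z"
  shows "rho P leq \<omega> z = r"
proof -
  obtain xs where "sat_chain P leq (xs @ [z])" "minimal_in P leq (hd (xs @ [z]))"
    using exists_chain_from_minimal[OF po] assms by (auto simp: maximal_in_def)
  moreover have "sat_chain P leq [z]"
    using assms by (simp add: sat_chain_def maximal_in_def)
  ultimately show ?thesis
    using rho_eq_chain_weight chain_weight_through[of xs z "[]"] assms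
    by (simp add: chain_weight_def)
qed

lemma rho_covers:
  assumes "covers P leq x y"
  shows "rho P leq \<omega> y = rho P leq \<omega> x + eps \<omega> x y"
proof -
  obtain xs where xs: "sat_chain P leq (xs @ [x])" "minimal_in P leq (hd (xs @ [x]))"
    using exists_chain_from_minimal[OF po] assms by (auto simp: covers_def)
  have "sat_chain P leq ((xs @ [x]) @ [y])"
    using sat_chain_join[of P leq xs x "[y]"] xs(1) assms by (simp add: sat_chain_Cons covers_def)
  moreover have "minimal_in P leq (hd ((xs @ [x]) @ [y]))"
    using xs(2) by (simp add: hd_append split: if_splits)
  ultimately have "rho P leq \<omega> y = chain_weight \<omega> (xs @ [x]) + chain_weight \<omega> [x, y]"
    using rho_eq_chain_weight[of "xs @ [x]" y] chain_weight_join[of \<omega> xs x "[y]"] by simp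
  then show ?thesis
    using rho_eq_chain_weight[OF xs] by (simp add: chain_weight_Cons)
qed

end

lemma linear_extension_iff_sorted_wrt:
  "linear_extension Q leq xs \<longleftrightarrow>
     distinct xs \<and> set xs = Q \<and> sorted_wrt (\<lambda>a b. \<not> less_in leq b a) xs"
  by (auto simp: linear_extension_def sorted_wrt_iff_nth_less)

lemma linear_extension_append:
  "linear_extension Q leq (xs @ ys) \<longleftrightarrow>
     linear_extension (set xs) leq xs \<and> linear_extension (set ys) leq ys
     \<and> set xs \<inter> set ys = {} \<and> set xs \<union> set ys = Q
     \<and> (\<forall>x\<in>set xs. \<forall>y\<in>set ys. \<not> less_in leq y x)"
  by (auto simp: linear_extension_iff_sorted_wrt sorted_wrt_append)

lemma linear_extension_last_maximal:
  assumes "linear_extension Q leq xs" "xs \<noteq> []"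
  shows "maximal_in Q leq (last xs)"
proof -
  have "linear_extension Q leq (butlast xs @ [last xs])"
    using assms by simp
  then have "\<forall>y\<in>set (butlast xs). \<not> less_in leq (last xs) y" "last xs \<in> Q"
    and "Q = set (butlast xs) \<union> {last xs}"
    unfolding linear_extension_append by (auto simp: linear_extension_def)
  then show ?thesis
    by (auto simp: maximal_in_def less_in_def)
qed

lemma rev_dropWhile_append_rev_takeWhile:
  "rev (dropWhile p (rev xs)) @ rev (takeWhile p (rev xs)) = xs"
  by (metis rev_append rev_rev_ident takeWhile_dropWhile_id)

lemma rev_takeWhile_rev_append:
  assumes "\<forall>y\<in>set ys. p y" "xs = [] \<or> \<not> p (last xs)"
  shows "rev (takeWhile p (rev (xs @ ys))) = ys"
    and "rev (dropWhile p (rev (xs @ ys))) = xs"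
proof -
  have "takeWhile p (rev xs) = []" "dropWhile p (rev xs) = rev xs"
    using assms(2) by (cases "rev xs"; auto simp flip: last_rev)+
  moreover have "takeWhile p (rev ys @ rev xs) = rev ys @ takeWhile p (rev xs)"
    by (rule takeWhile_append2) (use assms(1) in auto)
  moreover have "dropWhile p (rev ys @ rev xs) = dropWhile p (rev xs)"
    by (rule dropWhile_append2) (use assms(1) in auto)
  ultimately show "rev (takeWhile p (rev (xs @ ys))) = ys" "rev (dropWhile p (rev (xs @ ys))) = xs"
    by simp_all
qed

lemma rev_takeWhile_rev_nonempty:
  "xs \<noteq> [] \<Longrightarrow> p (last xs) \<Longrightarrow> rev (takeWhile p (rev xs)) \<noteq> []"
  by (cases "rev xs") (auto simp flip: last_rev)

lemma last_rev_dropWhile_rev: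
  "rev (dropWhile p (rev xs)) = [] \<or> \<not> p (last (rev (dropWhile p (rev xs))))"
proof (cases "dropWhile p (rev xs) = []")
  case False
  then have "\<not> p (hd (dropWhile p (rev xs)))"
    by (rule hd_dropWhile)
  then show ?thesis
    using False by (simp add: last_rev)
qed simp

(* The properties of rho, transported to the labels by c (\<omega> x) = rho x, used by the argument. *)
locale colored_poset =
  fixes P :: "'a set" and leq :: "'a \<Rightarrow> 'a \<Rightarrow> bool" and \<omega> :: "'a \<Rightarrow> nat" and c :: "nat \<Rightarrow> int"
  assumes poset: "poset_on P leq"
    and inj: "inj_on \<omega> P"
    and color_01: "x \<in> P \<Longrightarrow> c (\<omega> x) \<in> {0, 1}"
    and color_mono: "x \<in> P \<Longrightarrow> y \<in> P \<Longrightarrow> c (\<omega> x) < c (\<omega> y) \<Longrightarrow> \<omega> x < \<omega> y"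
    and color_covers: "covers P leq x y \<Longrightarrow> c (\<omega> x) \<noteq> c (\<omega> y)"
    and color_minimal: "minimal_in P leq x \<Longrightarrow> c (\<omega> x) = 0"
begin

abbreviation color :: "'a \<Rightarrow> int" where
  "color x \<equiv> c (\<omega> x)"

definition down_closed :: "'a set \<Rightarrow> bool" where
  "down_closed Q \<longleftrightarrow> Q \<subseteq> P \<and> (\<forall>x\<in>Q. \<forall>y\<in>P. less_in leq y x \<longrightarrow> y \<in> Q)"

(* The empty extension is admitted, so that the empty set contributes 1 to the sums below. *)
definition extensions_ending :: "'a set \<Rightarrow> int \<Rightarrow> 'a list set" where
  "extensions_ending Q a = {\<pi>. linear_extension Q leq \<pi> \<and> (\<pi> = [] \<or> color (last \<pi>) = a)}"

(* The possible letter sets of the last component of an extension of Q ending in colour a. *)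
definition final_blocks :: "'a set \<Rightarrow> int \<Rightarrow> 'a set set" where
  "final_blocks Q a = {B. B \<subseteq> Q \<and> B \<noteq> {} \<and> (\<forall>x\<in>B. color x = a)
     \<and> (\<forall>x\<in>B. \<forall>y\<in>Q. less_in leq x y \<longrightarrow> y \<in> B)}"

definition alt_odd :: "'a list \<Rightarrow> bool" where
  "alt_odd \<pi> \<longleftrightarrow> reverse_alternating (map \<omega> \<pi>) \<and> components_odd c (map \<omega> \<pi>)"

definition sign_sum :: "'a set \<Rightarrow> int \<Rightarrow> int" where
  "sign_sum Q a = (\<Sum>\<pi>\<in>extensions_ending Q a. (-1) ^ des (map \<omega> \<pi>))"

definition alt_odd_count :: "'a set \<Rightarrow> int \<Rightarrow> int" where
  "alt_odd_count Q a = (\<Sum>\<pi>\<in>extensions_ending Q a. of_bool (alt_odd \<pi>))"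

lemma down_closed_finite: "down_closed Q \<Longrightarrow> finite Q"
  using poset_on_finite[OF poset] by (auto simp: down_closed_def intro: finite_subset)

lemma extensions_ending_empty: "extensions_ending {} a = {[]}"
  by (auto simp: extensions_ending_def linear_extension_def)

lemma sign_sum_empty [simp]: "sign_sum {} a = 1"
  and alt_odd_count_empty [simp]: "alt_odd_count {} a = 1"
  by (simp_all add: sign_sum_def alt_odd_count_def extensions_ending_empty alt_odd_def reverse_alternating_def components_odd_def)

lemma extensions_ending_subset: "extensions_ending Q a \<subseteq> permutations_of_set Q"
  by (auto simp: extensions_ending_def linear_extension_def permutations_of_set_def)

lemma final_block_antichain:
  assumes Q: "down_closed Q" and B: "B \<in> final_blocks Q a" and "x \<in> B" "y \<in> B"
  shows "\<not> less_in leq x y"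
proof
  assume "less_in leq x y"
  have "B \<subseteq> Q" "Q \<subseteq> P"
    using B Q by (auto simp: final_blocks_def down_closed_def)
  then obtain z where z: "covers P leq x z" "leq z y"
    using exists_cover_below[OF poset _ _ \<open>less_in leq x y\<close>] \<open>x \<in> B\<close> \<open>y \<in> B\<close> by blast
  have "z \<in> Q"
  proof (cases "z = y")
    case False
    then show ?thesis
      using Q z \<open>y \<in> B\<close> \<open>B \<subseteq> Q\<close> by (auto simp: down_closed_def covers_def less_in_def)
  qed (use \<open>y \<in> B\<close> \<open>B \<subseteq> Q\<close> in auto)
  then have "z \<in> B"
    using B \<open>x \<in> B\<close> z(1) by (auto simp: final_blocks_def covers_def)
  then show False
    using color_covers[OF z(1)] B \<open>x \<in> B\<close> by (simp add: final_blocks_def)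
qed

lemma down_closed_Diff_final_block:
  assumes "down_closed Q" "B \<in> final_blocks Q a"
  shows "down_closed (Q - B)"
  using assms by (auto simp: down_closed_def final_blocks_def)

lemma down_closed_has_color_zero:
  assumes Q: "down_closed Q" and "Q \<noteq> {}"
  shows "\<exists>x\<in>Q. color x = 0"
proof -
  have "Q \<subseteq> P"
    using Q by (simp add: down_closed_def)
  then obtain x where x: "x \<in> Q" "\<forall>y\<in>Q. \<not> less_in leq y x"
    using exists_minimal_in_subset[OF poset _ \<open>Q \<noteq> {}\<close>] by blast
  moreover have "y \<in> Q" if "y \<in> P" "less_in leq y x" for y
    using Q x(1) that unfolding down_closed_def by blast
  ultimately have "minimal_in P leq x"
    using \<open>Q \<subseteq> P\<close> unfolding minimal_in_def by blast
  then show ?thesis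
    using x(1) color_minimal by blast
qed

lemma append_in_extensions_ending:
  assumes Q: "down_closed Q" and B: "B \<in> final_blocks Q a"
    and \<pi>: "\<pi> \<in> extensions_ending (Q - B) (1 - a)" and \<sigma>: "\<sigma> \<in> permutations_of_set B"
  shows "\<pi> @ \<sigma> \<in> extensions_ending Q a"
proof -
  have B_props: "B \<subseteq> Q" "B \<noteq> {}" "\<forall>x\<in>B. color x = a" "\<forall>x\<in>B. \<forall>y\<in>Q. less_in leq x y \<longrightarrow> y \<in> B"
    using B by (simp_all add: final_blocks_def)
  have le_\<pi>: "linear_extension (set \<pi>) leq \<pi>" and set_\<pi>: "set \<pi> = Q - B"
    using \<pi> by (auto simp: extensions_ending_def linear_extension_def)
  have set_\<sigma>: "set \<sigma> = B" "distinct \<sigma>"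
    using \<sigma> by (auto dest: permutations_of_setD)
  have "linear_extension (set \<sigma>) leq \<sigma>"
    using set_\<sigma> final_block_antichain[OF Q B] by (auto simp: linear_extension_def)
  moreover have "\<forall>x\<in>set \<pi>. \<forall>y\<in>set \<sigma>. \<not> less_in leq y x"
    using set_\<pi> set_\<sigma>(1) B_props(4) by blast
  ultimately have "linear_extension Q leq (\<pi> @ \<sigma>)"
    unfolding linear_extension_append using le_\<pi> set_\<pi> set_\<sigma>(1) B_props(1) by blast
  moreover have "color (last (\<pi> @ \<sigma>)) = a"
    using set_\<sigma>(1) B_props(2,3) by (cases "\<sigma> = []") auto
  ultimately show ?thesis
    by (simp add: extensions_ending_def)
qed

lemma final_run_split:
  assumes Q: "down_closed Q" "Q \<noteq> {}" and a: "a \<in> {0, 1}"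
    and \<pi>: "\<pi> \<in> extensions_ending Q a"
  defines "\<sigma> \<equiv> rev (takeWhile (\<lambda>x. color x = a) (rev \<pi>))"
    and "\<pi>' \<equiv> rev (dropWhile (\<lambda>x. color x = a) (rev \<pi>))"
  shows "set \<sigma> \<in> final_blocks Q a" "\<pi>' \<in> extensions_ending (Q - set \<sigma>) (1 - a)"
    "\<sigma> \<in> permutations_of_set (set \<sigma>)"
proof -
  have le: "linear_extension Q leq (\<pi>' @ \<sigma>)"
    using \<pi> rev_dropWhile_append_rev_takeWhile[of _ \<pi>] by (simp add: extensions_ending_def \<sigma>_def \<pi>'_def)
  then have parts: "linear_extension (set \<pi>') leq \<pi>'" "linear_extension (set \<sigma>) leq \<sigma>"
    "set \<pi>' \<inter> set \<sigma> = {}" "set \<pi>' \<union> set \<sigma> = Q" "\<forall>x\<in>set \<pi>'. \<forall>y\<in>set \<sigma>. \<not> less_in leq y x"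
    unfolding linear_extension_append by blast+
  have "\<pi> \<noteq> []" "color (last \<pi>) = a"
    using \<pi> Q(2) by (auto simp: extensions_ending_def linear_extension_def)
  then have "\<sigma> \<noteq> []"
    unfolding \<sigma>_def by (rule rev_takeWhile_rev_nonempty)
  have color_\<sigma>: "\<forall>x\<in>set \<sigma>. color x = a"
    by (auto simp: \<sigma>_def dest: set_takeWhileD)
  have "\<pi>' = [] \<or> color (last \<pi>') \<noteq> a"
    unfolding \<pi>'_def by (rule last_rev_dropWhile_rev)
  moreover have "last \<pi>' \<in> P" if "\<pi>' \<noteq> []"
    using that parts(4) Q(1) by (auto simp: down_closed_def)
  ultimately have "\<pi>' = [] \<or> color (last \<pi>') = 1 - a"
    using a color_01 by fastforce
  moreover have "Q - set \<sigma> = set \<pi>'"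
    using parts(3,4) by blast
  ultimately show "\<pi>' \<in> extensions_ending (Q - set \<sigma>) (1 - a)"
    using parts(1) by (simp add: extensions_ending_def)
  have "\<forall>x\<in>set \<sigma>. \<forall>y\<in>Q. less_in leq x y \<longrightarrow> y \<in> set \<sigma>"
    using parts(4,5) by blast
  then show "set \<sigma> \<in> final_blocks Q a"
    using parts(4) \<open>\<sigma> \<noteq> []\<close> color_\<sigma> by (auto simp: final_blocks_def)
  show "\<sigma> \<in> permutations_of_set (set \<sigma>)"
    using parts(2) by (auto simp: linear_extension_def)
qed

lemma extensions_ending_split:
  assumes "down_closed Q" "Q \<noteq> {}" "a \<in> {0, 1}"
  shows "bij_betw (\<lambda>(B, \<pi>, \<sigma>). \<pi> @ \<sigma>)
           (SIGMA B:final_blocks Q a. extensions_ending (Q - B) (1 - a) \<times> permutations_of_set B)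
           (extensions_ending Q a)"
    (is "bij_betw ?h ?S _")
proof -
  let ?p = "\<lambda>x. color x = a"
  let ?g = "\<lambda>\<pi>. (set (rev (takeWhile ?p (rev \<pi>))), rev (dropWhile ?p (rev \<pi>)), rev (takeWhile ?p (rev \<pi>)))"
  have "?g (\<pi> @ \<sigma>) = (B, \<pi>, \<sigma>)" if "(B, \<pi>, \<sigma>) \<in> ?S" for B \<pi> \<sigma>
  proof -
    have "\<forall>y\<in>set \<sigma>. ?p y" "set \<sigma> = B"
      using that by (auto simp: final_blocks_def dest: permutations_of_setD)
    moreover have "1 - a \<noteq> a"
      by presburger
    then have "\<pi> = [] \<or> \<not> ?p (last \<pi>)"
      using that by (auto simp: extensions_ending_def)
    ultimately show ?thesis
      using rev_takeWhile_rev_append[of \<sigma> ?p \<pi>] by simp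
  qed
  moreover have "?h (?g \<pi>) = \<pi>" for \<pi>
    by (simp add: rev_dropWhile_append_rev_takeWhile)
  moreover have "?h ` ?S \<subseteq> extensions_ending Q a"
    using append_in_extensions_ending[OF assms(1)] by auto
  moreover have "?g ` extensions_ending Q a \<subseteq> ?S"
    using final_run_split[OF assms] by auto
  ultimately show ?thesis
    by (intro bij_betw_byWitness[where f' = ?g]) auto
qed

lemma sum_extensions_ending_split:
  assumes "down_closed Q" "Q \<noteq> {}" "a \<in> {0, 1}"
  shows "(\<Sum>\<pi>\<in>extensions_ending Q a. F \<pi>) =
    (\<Sum>B\<in>final_blocks Q a. \<Sum>\<pi>\<in>extensions_ending (Q - B) (1 - a). \<Sum>\<sigma>\<in>permutations_of_set B. F (\<pi> @ \<sigma>))"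
proof -
  have "finite (final_blocks Q a)"
    using down_closed_finite[OF assms(1)] by (auto simp: final_blocks_def intro: finite_subset[of _ "Pow Q"])
  moreover have "finite (extensions_ending (Q - B) (1 - a))" for B
    using extensions_ending_subset finite_permutations_of_set by (rule finite_subset)
  ultimately show ?thesis
    using sum_reindex_Sigma_product[OF extensions_ending_split[OF assms], of F] by simp
qed

lemma block_boundary:
  assumes a: "a \<in> {0, 1}" and B: "B \<in> final_blocks Q a" and Q: "down_closed Q"
    and \<pi>: "\<pi> \<in> extensions_ending (Q - B) (1 - a)" "\<pi> \<noteq> []"
    and \<sigma>: "\<sigma> \<in> permutations_of_set B"
  shows "\<omega> (hd \<sigma>) < \<omega> (last \<pi>) \<longleftrightarrow> a = 0"
    and "\<omega> (last \<pi>) < \<omega> (hd \<sigma>) \<longleftrightarrow> a = 1"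
proof -
  have "B \<subseteq> Q" "Q \<subseteq> P" "B \<noteq> {}"
    using B Q by (auto simp: final_blocks_def down_closed_def)
  have last: "last \<pi> \<in> Q - B" "color (last \<pi>) = 1 - a"
    using \<pi> by (auto simp: extensions_ending_def linear_extension_def)
  have "\<sigma> \<noteq> []" "set \<sigma> = B"
    using \<sigma> \<open>B \<noteq> {}\<close> by (auto dest: permutations_of_setD)
  then have hd: "hd \<sigma> \<in> B" "color (hd \<sigma>) = a"
    using B by (auto simp: final_blocks_def)
  have "last \<pi> \<noteq> hd \<sigma>" "last \<pi> \<in> P" "hd \<sigma> \<in> P"
    using last(1) hd(1) \<open>B \<subseteq> Q\<close> \<open>Q \<subseteq> P\<close> by auto
  then have "\<omega> (last \<pi>) \<noteq> \<omega> (hd \<sigma>)"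
    by (rule inj_on_contraD[OF inj])
  moreover have "\<omega> (hd \<sigma>) < \<omega> (last \<pi>)" if "a = 0"
    using that color_mono[of "hd \<sigma>" "last \<pi>"] last hd \<open>B \<subseteq> Q\<close> \<open>Q \<subseteq> P\<close> by auto
  moreover have "\<omega> (last \<pi>) < \<omega> (hd \<sigma>)" if "a = 1"
    using that color_mono[of "last \<pi>" "hd \<sigma>"] last hd \<open>B \<subseteq> Q\<close> \<open>Q \<subseteq> P\<close> by auto
  ultimately show "\<omega> (hd \<sigma>) < \<omega> (last \<pi>) \<longleftrightarrow> a = 0" "\<omega> (last \<pi>) < \<omega> (hd \<sigma>) \<longleftrightarrow> a = 1"
    using a by auto
qed

lemma block_lengths:
  assumes "B \<in> final_blocks Q a" "\<pi> \<in> extensions_ending (Q - B) (1 - a)" "\<sigma> \<in> permutations_of_set B"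
  shows "length \<pi> = card (Q - B)" "\<pi> = [] \<longleftrightarrow> Q - B = {}" "length \<sigma> = card B" "\<sigma> \<noteq> []"
  using assms by (auto simp: extensions_ending_def linear_extension_def final_blocks_def permutations_of_set_def distinct_card[symmetric])

lemma sign_sum_block:
  assumes "a \<in> {0, 1}" "B \<in> final_blocks Q a" "down_closed Q"
  shows "(\<Sum>\<pi>\<in>extensions_ending (Q - B) (1 - a). \<Sum>\<sigma>\<in>permutations_of_set B. (-1) ^ des (map \<omega> (\<pi> @ \<sigma>)))
    = (if Q - B \<noteq> {} \<and> a = 0 then -1 else 1) * (sign_sum (Q - B) (1 - a) * sign_des_sum \<omega> B)"
  unfolding sign_sum_def sign_des_sum_def
proof (rule double_sum_factor)
  fix \<pi> \<sigma>
  assume \<pi>: "\<pi> \<in> extensions_ending (Q - B) (1 - a)" and \<sigma>: "\<sigma> \<in> permutations_of_set B"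
  note lengths = block_lengths[OF assms(2) \<pi> \<sigma>]
  have "des (map \<omega> \<pi> @ map \<omega> \<sigma>) = des (map \<omega> \<pi>) + des (map \<omega> \<sigma>) + of_bool (\<pi> \<noteq> [] \<and> a = 0)"
    using block_boundary(1)[OF assms \<pi> _ \<sigma>] lengths(4)
    by (cases "\<pi> = []") (simp_all add: des_append hd_map last_map)
  then show "(-1::int) ^ des (map \<omega> (\<pi> @ \<sigma>)) =
      (if Q - B \<noteq> {} \<and> a = 0 then -1 else 1) * ((-1) ^ des (map \<omega> \<pi>) * (-1) ^ des (map \<omega> \<sigma>))"
    using lengths(2) by (simp add: power_add)
qed

lemma alt_odd_count_block:
  assumes "a \<in> {0, 1}" "B \<in> final_blocks Q a" "down_closed Q"
  shows "(\<Sum>\<pi>\<in>extensions_ending (Q - B) (1 - a). \<Sum>\<sigma>\<in>permutations_of_set B. of_bool (alt_odd (\<pi> @ \<sigma>)))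
    = of_bool ((Q - B = {} \<or> (odd (card (Q - B)) \<longleftrightarrow> a = 1)) \<and> odd (card B))
      * (alt_odd_count (Q - B) (1 - a) * alternating_count \<omega> (even (card (Q - B))) B)"
  unfolding alt_odd_count_def alternating_count_def
proof (rule double_sum_factor)
  fix \<pi> \<sigma>
  assume \<pi>: "\<pi> \<in> extensions_ending (Q - B) (1 - a)" and \<sigma>: "\<sigma> \<in> permutations_of_set B"
  note lengths = block_lengths[OF assms(2) \<pi> \<sigma>]
  have "1 - a \<noteq> a"
    by presburger
  moreover have "\<pi> = [] \<or> color (last \<pi>) = 1 - a"
    using \<pi> by (simp add: extensions_ending_def)
  ultimately have last_color: "map \<omega> \<pi> = [] \<or> c (last (map \<omega> \<pi>)) \<noteq> a"
    by (cases "\<pi> = []") (simp_all add: last_map)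
  have "map \<omega> \<sigma> \<noteq> []"
    using lengths(4) by simp
  moreover have "\<forall>y\<in>set (map \<omega> \<sigma>). c y = a"
    using \<sigma> assms(2) by (auto simp: final_blocks_def dest: permutations_of_setD)
  ultimately have "components_odd c (map \<omega> \<pi> @ map \<omega> \<sigma>) \<longleftrightarrow> components_odd c (map \<omega> \<pi>) \<and> odd (card B)"
    using components_odd_append[of "map \<omega> \<sigma>" c a "map \<omega> \<pi>", OF _ _ last_color] lengths(3) by simp
  moreover have "alternating True (map \<omega> \<pi> @ map \<omega> \<sigma>) \<longleftrightarrow>
      alternating True (map \<omega> \<pi>) \<and> alternating (even (length \<pi>)) (map \<omega> \<sigma>)
      \<and> (\<pi> = [] \<or> (odd (length \<pi>) \<longleftrightarrow> a = 1))"
    using block_boundary[OF assms \<pi> _ \<sigma>] lengths(4) assms(1)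
    by (cases "\<pi> = []") (auto simp: alternating_append hd_map last_map)
  ultimately have "alt_odd (\<pi> @ \<sigma>) \<longleftrightarrow> ((\<pi> = [] \<or> (odd (length \<pi>) \<longleftrightarrow> a = 1)) \<and> odd (card B))
      \<and> alt_odd \<pi> \<and> alternating (even (length \<pi>)) (map \<omega> \<sigma>)"
    unfolding alt_odd_def reverse_alternating_iff map_append by blast
  then show "(of_bool (alt_odd (\<pi> @ \<sigma>)) :: int) =
      of_bool ((Q - B = {} \<or> (odd (card (Q - B)) \<longleftrightarrow> a = 1)) \<and> odd (card B))
      * (of_bool (alt_odd \<pi>) * of_bool (alternating (even (card (Q - B))) (map \<omega> \<sigma>)))"
    unfolding lengths(1,2)[symmetric] by (simp only: of_bool_conj)
qed

lemma block_cd_related: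
  assumes Q: "down_closed Q" and a: "a \<in> {0, 1}" and B: "B \<in> final_blocks Q a"
    and IH: "Q - B \<noteq> {} \<Longrightarrow> cd_related (int (card (Q - B)) - 1 - (1 - a))
               (sign_sum (Q - B) (1 - a)) (alt_odd_count (Q - B) (1 - a))"
  shows "cd_related (int (card Q) - 1 - a)
    ((if Q - B \<noteq> {} \<and> a = 0 then -1 else 1) * (sign_sum (Q - B) (1 - a) * sign_des_sum \<omega> B))
    (of_bool ((Q - B = {} \<or> (odd (card (Q - B)) \<longleftrightarrow> a = 1)) \<and> odd (card B))
      * (alt_odd_count (Q - B) (1 - a) * alternating_count \<omega> (even (card (Q - B))) B))"
proof -
  have "B \<subseteq> Q" "B \<noteq> {}" "Q \<subseteq> P"
    using B Q by (auto simp: final_blocks_def down_closed_def)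
  moreover have "finite Q"
    using Q by (rule down_closed_finite)
  ultimately have "finite B" "inj_on \<omega> B"
    using finite_subset inj_on_subset[OF inj order_trans] by metis+
  have card_Q: "card Q = card (Q - B) + card B"
    using \<open>finite B\<close> \<open>B \<subseteq> Q\<close> card_Diff_subset[of B Q] card_mono[OF \<open>finite Q\<close>, of B] by simp
  note antichain = sign_des_sum_cd_related[OF \<open>finite B\<close> \<open>inj_on \<omega> B\<close> \<open>B \<noteq> {}\<close>, of "even (card (Q - B))"]
  show ?thesis
  proof (cases "Q - B = {}")
    case True
    \<comment> \<open>Then B = Q contains a minimal element.\<close>
    obtain x where "x \<in> Q" "color x = 0"
      using down_closed_has_color_zero[OF Q] \<open>B \<subseteq> Q\<close> \<open>B \<noteq> {}\<close> by blast
    then have "a = 0"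
      using True B by (auto simp: final_blocks_def)
    then show ?thesis
      using antichain card_Q unfolding True by simp
  next
    case False
    let ?k = "nat (1 - a)"
    have "card (Q - B) \<ge> 1"
      using False \<open>finite Q\<close> by (simp add: Suc_le_eq card_gt_0_iff)
    then have rel: "cd_related ((int (card (Q - B)) - 1 - (1 - a)) + (int (card B) - 1) + 2 * int ?k)
        ((-1) ^ ?k * sign_sum (Q - B) (1 - a) * sign_des_sum \<omega> B)
        (of_bool (even (int (card (Q - B)) - 1 - (1 - a))) * alt_odd_count (Q - B) (1 - a)
          * (of_bool (odd (card B)) * alternating_count \<omega> (even (card (Q - B))) B))"
      using a by (intro cd_related_mult cd_related_even_factor IH False antichain) auto
    have "(int (card (Q - B)) - 1 - (1 - a)) + (int (card B) - 1) + 2 * int ?k = int (card Q) - 1 - a"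
      using a card_Q by auto
    moreover have "(-1::int) ^ ?k = (if Q - B \<noteq> {} \<and> a = 0 then -1 else 1)"
      using a False by auto
    moreover have "even (int (card (Q - B)) - 1 - (1 - a)) \<longleftrightarrow> (Q - B = {} \<or> (odd (card (Q - B)) \<longleftrightarrow> a = 1))"
      using a False by auto
    ultimately show ?thesis
      using rel by (simp only: of_bool_conj mult_ac)
  qed
qed

lemma sign_sum_cd_related:
  assumes "down_closed Q" "Q \<noteq> {}" "a \<in> {0, 1}"
  shows "cd_related (int (card Q) - 1 - a) (sign_sum Q a) (alt_odd_count Q a)"
  using assms
proof (induction "card Q" arbitrary: Q a rule: less_induct)
  case less
  have "sign_sum Q a = (\<Sum>\<pi>\<in>extensions_ending Q a. (-1) ^ des (map \<omega> \<pi>))"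
    by (simp add: sign_sum_def)
  also have "\<dots> = (\<Sum>B\<in>final_blocks Q a. (if Q - B \<noteq> {} \<and> a = 0 then -1 else 1)
                    * (sign_sum (Q - B) (1 - a) * sign_des_sum \<omega> B))"
    unfolding sum_extensions_ending_split[OF less.prems]
    using sign_sum_block[OF less.prems(3) _ less.prems(1)] by (rule sum.cong[OF refl])
  finally have S: "sign_sum Q a = \<dots>" .
  have "alt_odd_count Q a = (\<Sum>\<pi>\<in>extensions_ending Q a. of_bool (alt_odd \<pi>))"
    by (simp add: alt_odd_count_def)
  also have "\<dots> = (\<Sum>B\<in>final_blocks Q a. of_bool ((Q - B = {} \<or> (odd (card (Q - B)) \<longleftrightarrow> a = 1)) \<and> odd (card B))
                    * (alt_odd_count (Q - B) (1 - a) * alternating_count \<omega> (even (card (Q - B))) B))"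
    unfolding sum_extensions_ending_split[OF less.prems]
    using alt_odd_count_block[OF less.prems(3) _ less.prems(1)] by (rule sum.cong[OF refl])
  finally have G: "alt_odd_count Q a = \<dots>" .
  have IH: "cd_related (int (card (Q - B)) - 1 - (1 - a)) (sign_sum (Q - B) (1 - a)) (alt_odd_count (Q - B) (1 - a))"
    if B: "B \<in> final_blocks Q a" and "Q - B \<noteq> {}" for B
  proof -
    have "Q - B \<subset> Q"
      using B by (auto simp: final_blocks_def)
    then have "card (Q - B) < card Q"
      by (rule psubset_card_mono[OF down_closed_finite[OF less.prems(1)]])
    then show ?thesis
      using down_closed_Diff_final_block[OF less.prems(1) B] \<open>Q - B \<noteq> {}\<close> less.prems(3)
      by (intro less.hyps) auto
  qed
  show ?case
    unfolding S G by (intro cd_related_sum block_cd_related[OF less.prems(1,3)] IH)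
qed

lemma extensions_ending_all:
  assumes "\<And>x. maximal_in P leq x \<Longrightarrow> color x = r"
  shows "extensions_ending P r = {\<pi>. linear_extension P leq \<pi>}"
  using linear_extension_last_maximal assms by (auto simp: extensions_ending_def)

lemma inj_on_map_linear_extensions: "inj_on (map \<omega>) {\<pi>. linear_extension P leq \<pi>}"
  using inj by (intro inj_on_mapI) (auto simp: linear_extension_def intro: inj_on_subset)

lemma JH_eq_image: "JH P leq \<omega> = map \<omega> ` {\<pi>. linear_extension P leq \<pi>}"
  by (auto simp: JH_def)

lemma W_eq_sign_sum:
  assumes "\<And>x. maximal_in P leq x \<Longrightarrow> color x = r"
  shows "W P leq \<omega> (-1) = sign_sum P r"
proof -
  have "W P leq \<omega> (-1) = (\<Sum>\<pi>\<in>{\<pi>. linear_extension P leq \<pi>}. (-1) ^ des (map \<omega> \<pi>))"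
    unfolding W_def JH_eq_image by (simp add: sum.reindex[OF inj_on_map_linear_extensions])
  also have "\<dots> = sign_sum P r"
    by (simp add: sign_sum_def extensions_ending_all[OF assms])
  finally show ?thesis .
qed

lemma card_alt_odd_eq_alt_odd_count:
  assumes "\<And>x. maximal_in P leq x \<Longrightarrow> color x = r"
  shows "int (card {\<pi> \<in> JH P leq \<omega>. reverse_alternating \<pi> \<and> components_odd c \<pi>}) = alt_odd_count P r"
proof -
  have "{\<pi> \<in> JH P leq \<omega>. reverse_alternating \<pi> \<and> components_odd c \<pi>}
      = map \<omega> ` ({\<pi>. linear_extension P leq \<pi>} \<inter> {\<pi>. alt_odd \<pi>})"
    by (auto simp: JH_eq_image alt_odd_def)
  then have "card {\<pi> \<in> JH P leq \<omega>. reverse_alternating \<pi> \<and> components_odd c \<pi>}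
      = card ({\<pi>. linear_extension P leq \<pi>} \<inter> {\<pi>. alt_odd \<pi>})"
    using inj_on_subset[OF inj_on_map_linear_extensions] by (simp add: card_image)
  moreover have "finite {\<pi>. linear_extension P leq \<pi>}"
    using extensions_ending_all[OF assms] extensions_ending_subset
    by (metis finite_permutations_of_set finite_subset)
  ultimately show ?thesis
    unfolding alt_odd_count_def by (simp add: extensions_ending_all[OF assms])
qed

lemma CD_eq_card_alt_odd:
  assumes "P \<noteq> {}" and top: "\<And>x. maximal_in P leq x \<Longrightarrow> color x = r"
  shows "CD P leq \<omega> r = int (card {\<pi> \<in> JH P leq \<omega>. reverse_alternating \<pi> \<and> components_odd c \<pi>})"
proof -
  obtain z where "z \<in> P" "\<forall>b\<in>P. \<not> less_in leq z b"
    using exists_maximal_in_subset[OF poset subset_refl \<open>P \<noteq> {}\<close>] by blast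
  then have "r \<in> {0, 1}"
    using top[of z] color_01[of z] by (simp add: maximal_in_def)
  moreover have "down_closed P"
    by (simp add: down_closed_def)
  ultimately have "cd_related (int (card P) - 1 - r) (W P leq \<omega> (-1))
      (int (card {\<pi> \<in> JH P leq \<omega>. reverse_alternating \<pi> \<and> components_odd c \<pi>}))"
    using sign_sum_cd_related[OF _ \<open>P \<noteq> {}\<close>] W_eq_sign_sum[OF top] card_alt_odd_eq_alt_odd_count[OF top]
    by simp
  moreover have "int (card P) - 1 - r \<ge> -1"
    using \<open>r \<in> {0, 1}\<close> \<open>z \<in> P\<close> poset_on_finite[OF poset] by (auto simp: Suc_le_eq card_gt_0_iff)
  ultimately show ?thesis
    unfolding CD_def Let_def by (rule cd_related_CD_value)
qed

end

lemma colored_poset_rho: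
  assumes po: "poset_on P leq" and inj: "inj_on \<omega> P"
    and graded: "sign_graded P leq \<omega> r" and can: "canonical P leq \<omega>"
  shows "colored_poset P leq \<omega> (\<lambda>a. rho P leq \<omega> (the_inv_into P \<omega> a))"
proof -
  have rho: "rho P leq \<omega> (the_inv_into P \<omega> (\<omega> x)) = rho P leq \<omega> x" if "x \<in> P" for x
    using the_inv_into_f_f[OF inj that] by simp
  show ?thesis
  proof
    show "rho P leq \<omega> (the_inv_into P \<omega> (\<omega> x)) \<in> {0, 1}" if "x \<in> P" for x
      using can that rho by (simp add: canonical_def)
    show "\<omega> x < \<omega> y" if "x \<in> P" "y \<in> P"
      "rho P leq \<omega> (the_inv_into P \<omega> (\<omega> x)) < rho P leq \<omega> (the_inv_into P \<omega> (\<omega> y))" for x y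
      using can that rho by (simp add: canonical_def)
    show "rho P leq \<omega> (the_inv_into P \<omega> (\<omega> x)) \<noteq> rho P leq \<omega> (the_inv_into P \<omega> (\<omega> y))"
      if "covers P leq x y" for x y
    proof -
      have "x \<in> P" "y \<in> P"
        using that by (auto simp: covers_def)
      then show ?thesis
        using rho_covers[OF po graded that] rho by (simp add: eps_def)
    qed
    show "rho P leq \<omega> (the_inv_into P \<omega> (\<omega> x)) = 0" if "minimal_in P leq x" for x
      using that rho_minimal[OF po graded that] rho by (simp add: minimal_in_def)
  qed (fact po inj)+
qed

theorem theorem5p2:
  fixes P :: "'a set" and leq :: "'a \<Rightarrow> 'a \<Rightarrow> bool" and \<omega> :: "'a \<Rightarrow> nat" and r :: int
  assumes "poset_on P leq"
    and "P \<noteq> {}"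
    and "bij_betw \<omega> P {1..card P}"
    and "sign_graded P leq \<omega> r"
    and "canonical P leq \<omega>"
  shows "CD P leq \<omega> r =
    int (card {\<pi> \<in> JH P leq \<omega>. reverse_alternating \<pi>
                 \<and> components_odd (\<lambda>a. rho P leq \<omega> (the_inv_into P \<omega> a)) \<pi>})"
proof -
  have inj: "inj_on \<omega> P"
    using assms(3) by (rule bij_betw_imp_inj_on)
  interpret colored_poset P leq \<omega> "\<lambda>a. rho P leq \<omega> (the_inv_into P \<omega> a)"
    using colored_poset_rho[OF assms(1) inj assms(4,5)] .
  have "rho P leq \<omega> (the_inv_into P \<omega> (\<omega> x)) = r" if "maximal_in P leq x" for x
    using that rho_maximal[OF assms(1,4) that] the_inv_into_f_f[OF inj]
    by (simp add: maximal_in_def)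
  then show ?thesis
    by (rule CD_eq_card_alt_odd[OF assms(2)])
qed

end
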